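(* For every non negative integer $r \geq 0$, every tuning parameter $\lambda \geq 0$ and every data vector $y \in \mathbb{R}^n$, the boundary-point estimators at the last point $n$ are well defined, i.e. $$\max_{J \in \mathcal{I}: n \in J} \min_{I \in \mathcal{I}: n \in I, I \subseteq J} \Big[(P^{(|I|,r)} y_{I})_n + \frac{\lambda C_{I,J}}{|I|}\Big] \leq \min_{J \in \mathcal{I}: n \in J} \max_{I \in \mathcal{I}: n \in I, I \subseteq J} \Big[(P^{(|I|,r)} y_{I})_n - \frac{\lambda C_{I,J}}{|I|}\Big],$$ and likewise for the dyadic version $$\max_{J \in \mathcal{D}_n} \min_{I \in \mathcal{D}_n: I \subseteq J} \Big[(P^{(|I|,r)} y_{I})_n + \frac{\lambda C_{I,J}}{|I|}\Big] \leq \min_{J \in \mathcal{D}_n} \max_{I \in \mathcal{D}_n: I \subseteq J} \Big[(P^{(|I|,r)} y_{I})_n - \frac{\lambda C_{I,J}}{|I|}\Big].$$ Hence any value $\hat{\theta}^{(r,\lambda)}_n$ (resp. $\hat{\theta}^{(dyad,r,\lambda)}_n$) lying between the left and right hand sides exists. The proof is similar to that of the well-posedness of (interior) Minmax Trend Filtering.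
   Context: Data $y \in \mathbb{R}^n$. $\mathcal{I}$ is the set of all discrete intervals $[a:b]=\{a,\dots,b\}$, $1 \le a \le b \le n$; $y_I$ is the restriction of $y$ to $I$. For an interval $I$, $P^{(|I|,r)}$ is the orthogonal projection matrix onto the subspace of vectors in $\mathbb{R}^{|I|}$ that are restrictions to $I$ of discrete polynomial vectors $(f(1/n),\dots,f(n/n))$ with $f$ a polynomial of degree $r$; $(P^{(|I|,r)} y_I)_n$ denotes the entry of the fitted local polynomial regression on $y_I$ at location $n$. Here all intervals considered contain the last point $n$, and $C_{I,J} = 1$ if $I \neq J$ and $C_{I,J} = -1$ if $I = J$. $\mathcal{D}_n$ is the set of dyadified intervals $[l:r]$ with $l \in \mathcal{L}_n$, $r \in \mathcal{R}_n$, where (identifying dyadic intervals of $[n]$ with nodes of a complete binary tree) $\mathcal{R}_n=\{n\}$ and $\mathcal{L}_n=\{l_0,l_1,\dots\}$ is built by $l_0 = n$ and, if $l_j \neq 1$ is the left end point of a dyadic interval at level $-j$: if that node is a right child, $l_{j+1}$ is the left end point of its parent; if it is a left child, $l_{j+1}$ is the left end point of the left neighbor of its parent; stop when $l_j=1$. *)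

theory Defs
  imports "HOL-Computational_Algebra.Polynomial" Complex_Main
begin

definition intervals :: "nat \<Rightarrow> nat set set" where
  "intervals n = {{a..b} | a b. 1 \<le> a \<and> a \<le> b \<and> b \<le> n}"

definition polyvec :: "nat \<Rightarrow> nat \<Rightarrow> nat set \<Rightarrow> (nat \<Rightarrow> real) set" where
  "polyvec n r I = {w. \<exists>p :: real poly. degree p \<le> r \<and>
       (\<forall>i. w i = (if i \<in> I then poly p (real i / real n) else 0))}"

definition locfit :: "nat \<Rightarrow> nat \<Rightarrow> nat set \<Rightarrow> (nat \<Rightarrow> real) \<Rightarrow> (nat \<Rightarrow> real)" where
  "locfit n r I y = (THE g. g \<in> polyvec n r I \<and>
       (\<forall>w \<in> polyvec n r I. (\<Sum>i\<in>I. (y i - g i) * w i) = 0))"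

definition Cc :: "nat set \<Rightarrow> nat set \<Rightarrow> real" where
  "Cc I J = (if I = J then -1 else 1)"

text \<open>Dyadic construction: l_j = k_j * 2^j + 1 where k_j is the 0-based index of
  the dyadic node at level -j; k_0 = n-1 and k_{j+1} = (k_j - 1) div 2
  (right child: parent; left child: left neighbour of parent); once k_j = 0
  (l_j = 1) the sequence stays at 0.\<close>
fun dyad_k :: "nat \<Rightarrow> nat \<Rightarrow> nat" where
  "dyad_k n 0 = n - 1"
| "dyad_k n (Suc j) = (dyad_k n j - 1) div 2"

definition dyad_L :: "nat \<Rightarrow> nat set" where
  "dyad_L n = range (\<lambda>j. dyad_k n j * 2 ^ j + 1)"

definition dyad_D :: "nat \<Rightarrow> nat set set" where
  "dyad_D n = {{l..n} | l. l \<in> dyad_L n}"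

definition lower_bd :: "nat \<Rightarrow> nat \<Rightarrow> real \<Rightarrow> (nat \<Rightarrow> real) \<Rightarrow> nat set set \<Rightarrow> real" where
  "lower_bd n r lam y F = Max ((\<lambda>J. Min ((\<lambda>I. locfit n r I y n + lam * Cc I J / real (card I))
        ` {I \<in> F. I \<subseteq> J})) ` F)"

definition upper_bd :: "nat \<Rightarrow> nat \<Rightarrow> real \<Rightarrow> (nat \<Rightarrow> real) \<Rightarrow> nat set set \<Rightarrow> real" where
  "upper_bd n r lam y F = Min ((\<lambda>J. Max ((\<lambda>I. locfit n r I y n - lam * Cc I J / real (card I))
        ` {I \<in> F. I \<subseteq> J})) ` F)"

end

theory Submission
  imports Defs
begin

text \<open>Write the objective as g I \<plusminus> lam C(I,J)/|I|, where C(I,J) = -1 exactly when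
  I = J. If two outer intervals are comparable, say J \<subseteq> J', the inner minimum at J is at most
  its value at I = J, namely g J - lam/|J|, and this is at most g J - lam C(J,J')/|J|, a candidate
  of the inner maximum at J'; if J' \<subseteq> J one argues symmetrically with I = J'. Every inner
  minimum is therefore below every inner maximum, which gives max-min \<le> min-max. Both families
  of the theorem consist of intervals with the common right end point n, hence are totally
  ordered by inclusion.\<close>

lemma Min_penalized_le_Max_penalized:
  fixes F :: "nat set set" and g :: "nat set \<Rightarrow> real"
  assumes "lam \<ge> 0" and "finite F" and "J \<in> F" and "J' \<in> F" and "J \<subseteq> J' \<or> J' \<subseteq> J"
  shows "Min ((\<lambda>I. g I + lam * Cc I J / real (card I)) ` {I \<in> F. I \<subseteq> J})
       \<le> Max ((\<lambda>I. g I - lam * Cc I J' / real (card I)) ` {I \<in> F. I \<subseteq> J'})"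
    (is "Min (?lo ` ?below J) \<le> Max (?up ` ?below J')")
proof -
  have finite_below: "finite (?below K)" for K
    using \<open>finite F\<close> by simp
  have penalty_bound: "lam * Cc I K / real (card I) \<le> lam / real (card I)" for I K
    using \<open>lam \<ge> 0\<close> by (simp add: Cc_def divide_right_mono)
  show ?thesis
  proof (cases "J \<subseteq> J'")
    case True
    have "Min (?lo ` ?below J) \<le> ?lo J"
      using finite_below \<open>J \<in> F\<close> by (intro Min_le) auto
    also have "\<dots> \<le> ?up J"
      using penalty_bound[of J J'] by (simp add: Cc_def)
    also have "\<dots> \<le> Max (?up ` ?below J')"
      using finite_below \<open>J \<in> F\<close> True by (intro Max_ge) auto
    finally show ?thesis .
  next
    case False
    with assms(5) have "J' \<subseteq> J" by blast
    have "Min (?lo ` ?below J) \<le> ?lo J'"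
      using finite_below \<open>J' \<in> F\<close> \<open>J' \<subseteq> J\<close> by (intro Min_le) auto
    also have "\<dots> \<le> ?up J'"
      using penalty_bound[of J' J] by (simp add: Cc_def)
    also have "\<dots> \<le> Max (?up ` ?below J')"
      using finite_below \<open>J' \<in> F\<close> by (intro Max_ge) auto
    finally show ?thesis .
  qed
qed

lemma Max_Min_penalized_le_Min_Max_penalized:
  fixes F :: "nat set set" and g :: "nat set \<Rightarrow> real"
  assumes "lam \<ge> 0" and "finite F" and "F \<noteq> {}" and "chain\<^sub>\<subseteq> F"
  shows "Max ((\<lambda>J. Min ((\<lambda>I. g I + lam * Cc I J / real (card I)) ` {I \<in> F. I \<subseteq> J})) ` F)
       \<le> Min ((\<lambda>J. Max ((\<lambda>I. g I - lam * Cc I J / real (card I)) ` {I \<in> F. I \<subseteq> J})) ` F)"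
  using assms Min_penalized_le_Max_penalized[OF assms(1,2)]
  by (simp add: Max_le_iff Min_ge_iff chain_subset_def)

lemma lower_bd_le_upper_bd:
  assumes "lam \<ge> 0" and "finite F" and "F \<noteq> {}" and "chain\<^sub>\<subseteq> F"
  shows "lower_bd n r lam y F \<le> upper_bd n r lam y F"
  unfolding lower_bd_def upper_bd_def using assms by (rule Max_Min_penalized_le_Min_Max_penalized)

lemma chain_subset_atLeastAtMost_same_upper:
  fixes b :: "'a :: linorder"
  assumes "F \<subseteq> range (\<lambda>a. {a..b})"
  shows "chain\<^sub>\<subseteq> F"
  unfolding chain_subset_def
proof (intro ballI)
  fix A B
  assume "A \<in> F" "B \<in> F"
  with assms obtain a a' where "A = {a..b}" "B = {a'..b}"
    by blast
  then show "A \<subseteq> B \<or> B \<subseteq> A"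
    by (cases "a \<le> a'") auto
qed

lemma intervals_containing_upper_subset: "{I \<in> intervals n. n \<in> I} \<subseteq> range (\<lambda>a. {a..n})"
  by (auto simp: intervals_def)

lemma dyad_D_subset: "dyad_D n \<subseteq> range (\<lambda>l. {l..n})"
  by (auto simp: dyad_D_def)

lemma finite_subset_range_atLeastAtMost:
  fixes n :: nat
  assumes "F \<subseteq> range (\<lambda>a. {a..n})"
  shows "finite F"
  using assms by (intro finite_subset[of F "Pow {..n}"]) auto

theorem lemma8:
  fixes n r :: nat and lam :: real and y :: "nat \<Rightarrow> real"
  assumes "n \<ge> 1" and "lam \<ge> 0"
  shows "lower_bd n r lam y {I \<in> intervals n. n \<in> I}
           \<le> upper_bd n r lam y {I \<in> intervals n. n \<in> I}
       \<and> lower_bd n r lam y (dyad_D n) \<le> upper_bd n r lam y (dyad_D n)"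
proof -
  have "{n..n} \<in> intervals n"
    using \<open>n \<ge> 1\<close> unfolding intervals_def by blast
  then have "{I \<in> intervals n. n \<in> I} \<noteq> {}"
    by auto
  moreover have "dyad_D n \<noteq> {}"
    by (auto simp: dyad_D_def dyad_L_def)
  ultimately show ?thesis
    using intervals_containing_upper_subset dyad_D_subset
    by (intro conjI lower_bd_le_upper_bd[OF \<open>lam \<ge> 0\<close>]
        finite_subset_range_atLeastAtMost chain_subset_atLeastAtMost_same_upper)
qed

end
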